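(* For any finite alphabet $\mathfrak{G}$, the pair of graded graphs $(\mathbf{S}_\bullet(\mathfrak{G}), \mathbf{U}, \mathbf{V})$ is $\phi$-diagonal dual, i.e. $\mathbf{V}^\star \mathbf{U} - \mathbf{U} \mathbf{V}^\star = \phi$, for the linear map $\phi : \mathbb{K}\langle\mathbf{S}_\bullet(\mathfrak{G})\rangle \to \mathbb{K}\langle\mathbf{S}_\bullet(\mathfrak{G})\rangle$ satisfying $\phi(\mathfrak{t}) = (\#\mathfrak{G})\, \mathrm{nf}(\mathfrak{t})\, \mathfrak{t}$ for any $\mathfrak{G}$-tree $\mathfrak{t}$.
   Context: $\mathfrak{G}$ is a finite alphabet: a finite set of letters, each letter $\mathtt{a}$ having an arity $|\mathtt{a}|\geq 1$. A $\mathfrak{G}$-tree is either the leaf (the unique tree with no internal node) or $\mathtt{a}[\mathfrak{s}_1,\dots,\mathfrak{s}_{|\mathtt{a}|}]$, a root decorated by $\mathtt{a}\in\mathfrak{G}$ whose children are the $\mathfrak{G}$-trees $\mathfrak{s}_1,\dots,\mathfrak{s}_{|\mathtt{a}|}$. The degree $\deg(\mathfrak{t})$ is the number of internal nodes, the arity $|\mathfrak{t}|$ the number of leaves (ordered from left to right). $\mathbf{S}_\bullet(\mathfrak{G})$ is the set of $\mathfrak{G}$-trees graded by degree. Nodes are addressed by words of positive integers: the root is $\epsilon$ and the $i$-th child of $u$ is $ui$. For $i\in[|\mathfrak{t}|]$, $\mathfrak{t}\circ_i \mathtt{a}$ is obtained by replacing the $i$-th leaf of $\mathfrak{t}$ by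 an internal node decorated by $\mathtt{a}$ with $|\mathtt{a}|$ leaves as children. The linear map $\mathbf{U}$ is defined by $\mathbf{U}(\mathfrak{t}) = \sum_{\mathtt{a}\in\mathfrak{G},\, i\in[|\mathfrak{t}|]} \mathfrak{t}\circ_i \mathtt{a}$. The linear map $\mathbf{V}$ is the adjoint (for the scalar product making $\mathfrak{G}$-trees orthonormal) of the map $\mathbf{V}^\star$ defined recursively by: $\mathbf{V}^\star$ of the leaf is $0$; $\mathbf{V}^\star(\mathtt{a}[\mathfrak{s}, \text{leaf}, \dots, \text{leaf}]) = \mathfrak{s}$; and $\mathbf{V}^\star(\mathtt{a}[\mathfrak{s}_1,\dots,\mathfrak{s}_{|\mathtt{a}|}]) = \sum_{j\in[2,|\mathtt{a}|]} \mathtt{a}[\mathfrak{s}_1,\dots,\mathfrak{s}_{j-1},\mathbf{V}^\star(\mathfrak{s}_j),\mathfrak{s}_{j+1},\dots,\mathfrak{s}_{|\mathtt{a}|}]$ when some $\mathfrak{s}_j$ with $j\geq 2$ is not the leaf. A leaf of $\mathfrak{t}$ is non-first if its address word contains no letter $1$, and $\mathrm{nf}(\mathfrak{t})$ is the number of non-first leaves of $\mathfrak{t}$ (so $\mathrm{nf}$ of the leaf is $1$). *)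

theory Defs
  imports "HOL-Library.Multiset"
begin

text \<open>Planar rooted trees whose internal nodes are decorated by letters.
  The alphabet is a finite set G of letters together with an arity function ar.\<close>

datatype 'a tree = Leaf | Node 'a "'a tree list"

fun gtree :: "'a set \<Rightarrow> ('a \<Rightarrow> nat) \<Rightarrow> 'a tree \<Rightarrow> bool" where
  "gtree G ar Leaf = True"
| "gtree G ar (Node a ts) = (a \<in> G \<and> length ts = ar a \<and> (\<forall>t\<in>set ts. gtree G ar t))"

text \<open>Arity of a tree = number of leaves.\<close>
fun leaves :: "'a tree \<Rightarrow> nat" where
  "leaves Leaf = 1"
| "leaves (Node a ts) = sum_list (map leaves ts)"

text \<open>Number of non-first leaves: leaves whose address contains no letter 1.\<close>
fun nf :: "'a tree \<Rightarrow> nat" where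
  "nf Leaf = 1"
| "nf (Node a []) = 0"
| "nf (Node a (t # ts)) = sum_list (map nf ts)"

text \<open>graft ar t i a = t \<circ>_(i+1) a : replace the leaf with 0-based index i (from the left)
  by a node labelled a with ar a leaves.\<close>
fun graft :: "('a \<Rightarrow> nat) \<Rightarrow> 'a tree \<Rightarrow> nat \<Rightarrow> 'a \<Rightarrow> 'a tree"
and graft_list :: "('a \<Rightarrow> nat) \<Rightarrow> 'a tree list \<Rightarrow> nat \<Rightarrow> 'a \<Rightarrow> 'a tree list" where
  "graft ar Leaf i a = (if i = 0 then Node a (replicate (ar a) Leaf) else Leaf)"
| "graft ar (Node b ts) i a = Node b (graft_list ar ts i a)"
| "graft_list ar [] i a = []"
| "graft_list ar (t # ts) i a =
     (if i < leaves t then graft ar t i a # ts else t # graft_list ar ts (i - leaves t) a)"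

text \<open>The map U on a basis tree, as a multiset of trees (coefficients are multiplicities).\<close>
definition U_tree :: "'a set \<Rightarrow> ('a \<Rightarrow> nat) \<Rightarrow> 'a tree \<Rightarrow> 'a tree multiset" where
  "U_tree G ar t = (\<Sum>a\<in>G. \<Sum>i<leaves t. {# graft ar t i a #})"

text \<open>The map V-star on a basis tree. Children positions 2..|a| are the 0-based list
  indices 1..<length ts.\<close>
function Vstar_tree :: "'a tree \<Rightarrow> 'a tree multiset" where
  "Vstar_tree Leaf = {#}"
| "Vstar_tree (Node a ts) =
     (if ts = [] then {#}
      else if (\<forall>s\<in>set (tl ts). s = Leaf) then {# hd ts #}
      else (\<Sum>j\<in>{1..<length ts}. image_mset (\<lambda>s'. Node a (ts[j := s'])) (Vstar_tree (ts ! j))))"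
  by pat_completeness auto
termination
  by (relation "measure size") (auto intro: size_list_estimation' nth_mem simp: less_Suc_eq_le)

text \<open>Vectors of the free K-module on trees: coefficient functions (of finite support).
  Linear extension of a map given on basis trees by a multiset of trees.\<close>
definition lin :: "('a tree \<Rightarrow> 'a tree multiset) \<Rightarrow> ('a tree \<Rightarrow> 'k::comm_ring_1) \<Rightarrow> ('a tree \<Rightarrow> 'k)" where
  "lin f v = (\<lambda>s. \<Sum>t\<in>{t. v t \<noteq> 0}. v t * of_nat (count (f t) s))"

definition phi_tree :: "'a set \<Rightarrow> 'a tree \<Rightarrow> 'a tree multiset" where
  "phi_tree G t = replicate_mset (card G * nf t) t"

end

(* On a node Node a ts both maps act through one child at a time: U grafts a letter into any
   child, and, as long as some child other than the first is not a leaf, V* prunes inside one of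
   the children 2..|a|.  Updates at distinct children commute, so the commutator V*U - UV* at
   such a node is the sum of the commutators at the children 2..|a|, which by induction give
   (#G) nf(t_j) t; these add up to (#G) nf(t) t because nf(t) is the sum of the nf(t_j), j >= 2.
   If all children but the first are leaves, V* returns the first child t_1 instead, and
   V*U(t) = U(t_1) + (#G) m t: the extra terms come from grafting a letter at one of the
   m = nf(t) non-first leaves and pruning it again.  At the leaf, U creates the #G corollas,
   and V* sends each of them back to the leaf. *)

theory Submission
  imports Defs
begin

lemma image_mset_sum: "image_mset h (\<Sum>j\<in>J. M j) = (\<Sum>j\<in>J. image_mset h (M j))"
  by (induction J rule: infinite_finite_induct) simp_all

lemma image_mset_sum_mset: "image_mset h (\<Sum>x\<in>#M. f x) = (\<Sum>x\<in>#M. image_mset h (f x))"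
  by (induction M) simp_all

lemma sum_mset_sum: "(\<Sum>x\<in>#(\<Sum>j\<in>J. M j). f x) = (\<Sum>j\<in>J. \<Sum>x\<in>#M j. f x)"
  by (induction J rule: infinite_finite_induct) simp_all

lemma sum_mset_sum_commute: "(\<Sum>x\<in>#M. \<Sum>j\<in>J. f x j) = (\<Sum>j\<in>J. \<Sum>x\<in>#M. f x j)"
  by (induction M) (simp_all add: sum.distrib)

lemma replicate_mset_add: "replicate_mset (m + n) x = replicate_mset m x + replicate_mset n x"
  by (induction m) simp_all

lemma sum_replicate_mset: "(\<Sum>i\<in>A. replicate_mset (f i) x) = replicate_mset (\<Sum>i\<in>A. f i) x"
  by (induction A rule: infinite_finite_induct) (simp_all add: replicate_mset_add)

lemma sum_singleton_mset_const: "(\<Sum>i\<in>A. {#x#}) = replicate_mset (card A) x"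
  using sum_replicate_mset[where f="\<lambda>_. 1"] by simp

lemma sum_lessThan_add:
  "(\<Sum>i<m + n. f i) = (\<Sum>i<m. f i) + (\<Sum>i<n. f (m + i))" for f :: "nat \<Rightarrow> 'b::comm_monoid_add"
  by (induction n) (simp_all add: ac_simps)

definition updates_at :: "('b \<Rightarrow> 'b multiset) \<Rightarrow> nat set \<Rightarrow> 'b list \<Rightarrow> 'b list multiset" where
  "updates_at f K xs = (\<Sum>k\<in>K. image_mset (\<lambda>y. xs[k := y]) (f (xs ! k)))"

lemma length_updates_at: "ys \<in># updates_at f K xs \<Longrightarrow> length ys = length xs"
  by (cases "finite K") (auto simp: updates_at_def set_mset_sum)

lemma sum_mset_updates_at:
  "(\<Sum>ys\<in>#updates_at f K xs. g ys) = (\<Sum>k\<in>K. \<Sum>y\<in>#f (xs ! k). g (xs[k := y]))"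
  by (simp add: updates_at_def sum_mset_sum image_mset.compositionality o_def)

lemma updates_at_commute:
  assumes "finite K" and "J \<subseteq> K" and "\<forall>j\<in>J. j < length xs"
    and diag: "\<And>j. j \<in> J \<Longrightarrow> (\<Sum>y\<in>#f (xs ! j). g y) = (\<Sum>y\<in>#g (xs ! j). f y) + D j"
  shows "(\<Sum>ys\<in>#updates_at f K xs. updates_at g J ys)
       = (\<Sum>ys\<in>#updates_at g J xs. updates_at f K ys) + (\<Sum>j\<in>J. image_mset (\<lambda>y. xs[j := y]) (D j))"
proof -
  define L where "L j k = (\<Sum>y\<in>#f (xs ! k). image_mset (\<lambda>z. xs[k := y, j := z]) (g (xs[k := y] ! j)))"
    for j k
  define R where "R j k = (\<Sum>z\<in>#g (xs ! j). image_mset (\<lambda>y. xs[j := z, k := y]) (f (xs[j := z] ! k)))"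
    for j k
  have LR: "L j k = R j k + (if k = j then image_mset (\<lambda>y. xs[j := y]) (D j) else {#})"
    if "j \<in> J" for j k
  proof (cases "k = j")
    case True
    have "L j k = image_mset (\<lambda>y. xs[j := y]) (\<Sum>y\<in>#f (xs ! j). g y)"
      using True \<open>j \<in> J\<close> assms(3) by (simp add: L_def image_mset_sum_mset)
    also have "\<dots> = R j k + image_mset (\<lambda>y. xs[j := y]) (D j)"
      using True \<open>j \<in> J\<close> assms(3) by (simp add: diag R_def image_mset_sum_mset)
    finally show ?thesis using True by simp
  next
    case False
    have "L j k = (\<Sum>y\<in>#f (xs ! k). \<Sum>z\<in>#g (xs ! j). {#xs[j := z, k := y]#})"
      using False by (simp add: L_def list_update_swap)
    also have "\<dots> = (\<Sum>z\<in>#g (xs ! j). \<Sum>y\<in>#f (xs ! k). {#xs[j := z, k := y]#})"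
      by (rule sum_mset.swap)
    also have "\<dots> = R j k"
      using False by (simp add: R_def)
    finally show ?thesis using False by simp
  qed
  have "(\<Sum>ys\<in>#updates_at f K xs. updates_at g J ys) = (\<Sum>j\<in>J. \<Sum>k\<in>K. L j k)"
    unfolding sum_mset_updates_at unfolding updates_at_def sum_mset_sum_commute L_def
    by (rule sum.swap)
  also have "\<dots> = (\<Sum>j\<in>J. \<Sum>k\<in>K. R j k) + (\<Sum>j\<in>J. image_mset (\<lambda>y. xs[j := y]) (D j))"
  proof -
    have "(\<Sum>k\<in>K. L j k) = (\<Sum>k\<in>K. R j k) + image_mset (\<lambda>y. xs[j := y]) (D j)" if "j \<in> J" for j
      using assms(1,2) that by (simp add: LR sum.distrib subset_iff)
    then show ?thesis by (simp add: sum.distrib cong: sum.cong)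
  qed
  also have "(\<Sum>j\<in>J. \<Sum>k\<in>K. R j k) = (\<Sum>ys\<in>#updates_at g J xs. updates_at f K ys)"
    unfolding sum_mset_updates_at unfolding updates_at_def sum_mset_sum_commute R_def ..
  finally show ?thesis .
qed

lemma sum_graft_list:
  "(\<Sum>i<sum_list (map leaves ts). {#graft_list ar ts i b#})
   = (\<Sum>k<length ts. image_mset (\<lambda>s. ts[k := s]) (\<Sum>i<leaves (ts ! k). {#graft ar (ts ! k) i b#}))"
proof (induction ts)
  case Nil
  then show ?case by simp
next
  case (Cons t ts)
  have "(\<Sum>i<sum_list (map leaves (t # ts)). {#graft_list ar (t # ts) i b#})
      = image_mset (\<lambda>s. s # ts) (\<Sum>i<leaves t. {#graft ar t i b#})
        + image_mset (Cons t) (\<Sum>i<sum_list (map leaves ts). {#graft_list ar ts i b#})"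
    by (simp add: sum_lessThan_add image_mset_sum)
  also have "\<dots> = (\<Sum>k<length (t # ts). image_mset (\<lambda>s. (t # ts)[k := s])
                      (\<Sum>i<leaves ((t # ts) ! k). {#graft ar ((t # ts) ! k) i b#}))"
    unfolding Cons.IH length_Cons sum.lessThan_Suc_shift
    by (simp add: image_mset_sum image_mset.compositionality o_def)
  finally show ?case .
qed

lemma U_tree_Node:
  "U_tree G ar (Node a ts) = image_mset (Node a) (updates_at (U_tree G ar) {..<length ts} ts)"
proof -
  have "U_tree G ar (Node a ts)
      = image_mset (Node a) (\<Sum>b\<in>G. \<Sum>i<sum_list (map leaves ts). {#graft_list ar ts i b#})"
    by (simp add: U_tree_def image_mset_sum)
  also have "(\<Sum>b\<in>G. \<Sum>i<sum_list (map leaves ts). {#graft_list ar ts i b#})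
      = updates_at (U_tree G ar) {..<length ts} ts"
    unfolding sum_graft_list updates_at_def U_tree_def image_mset_sum by (rule sum.swap)
  finally show ?thesis .
qed

lemma U_tree_Leaf: "U_tree G ar Leaf = (\<Sum>b\<in>G. {#Node b (replicate (ar b) Leaf)#})"
  by (simp add: U_tree_def)

lemma Leaf_notin_U_tree: "Leaf \<notin># U_tree G ar t"
  by (cases "finite G"; cases t) (auto simp: U_tree_def set_mset_sum)

lemma Vstar_tree_Node_branching:
  "\<exists>s\<in>set (tl ts). s \<noteq> Leaf \<Longrightarrow>
    Vstar_tree (Node a ts) = image_mset (Node a) (updates_at Vstar_tree {1..<length ts} ts)"
  by (auto simp: updates_at_def image_mset_sum image_mset.compositionality o_def)

lemma Vstar_tree_corolla: "n \<ge> 1 \<Longrightarrow> Vstar_tree (Node b (replicate n Leaf)) = {#Leaf#}"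
  by (cases n) auto

lemma nf_Node: "nf (Node a ts) = (\<Sum>j\<in>{1..<length ts}. nf (ts ! j))"
proof (cases ts)
  case (Cons t rest)
  have "nf (Node a ts) = (\<Sum>j<length rest. nf (rest ! j))"
    by (simp add: Cons sum_list_sum_nth atLeast0LessThan)
  also have "\<dots> = (\<Sum>j\<in>{Suc 0..<Suc (length rest)}. nf (ts ! j))"
    unfolding sum.shift_bounds_Suc_ivl by (simp add: Cons atLeast0LessThan)
  finally show ?thesis by (simp add: Cons)
qed simp

lemma Vstar_tree_graft_corolla:
  assumes "i < m" and "n \<ge> 1"
  shows "Vstar_tree (Node a (t # (replicate m Leaf)[i := Node b (replicate n Leaf)]))
       = {#Node a (t # replicate m Leaf)#}"
proof -
  let ?ts = "t # (replicate m Leaf)[i := Node b (replicate n Leaf)]"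
  have "updates_at Vstar_tree {1..<length ?ts} ?ts
      = (\<Sum>j\<in>{1..<Suc m}. if j = Suc i then {#t # replicate m Leaf#} else {#})"
    unfolding updates_at_def
  proof (intro sum.cong)
    fix j assume "j \<in> {1..<Suc m}"
    then obtain j' where "j = Suc j'" "j' < m" by (cases j) auto
    then show "image_mset (\<lambda>y. ?ts[j := y]) (Vstar_tree (?ts ! j))
             = (if j = Suc i then {#t # replicate m Leaf#} else {#})"
      using assms by (auto simp: Vstar_tree_corolla nth_list_update list_update_same_conv
                          simp del: Vstar_tree.simps(2))
  qed simp
  also have "\<dots> = {#t # replicate m Leaf#}"
    using assms(1) by simp
  moreover have "Vstar_tree (Node a ?ts) = image_mset (Node a) (updates_at Vstar_tree {1..<length ?ts} ?ts)"
    using assms(1) by (intro Vstar_tree_Node_branching) (auto intro!: bexI[OF _ set_update_memI])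
  ultimately show ?thesis by simp
qed

lemma Vstar_U_tree_Node_first_child:
  assumes "\<forall>b\<in>G. ar b \<ge> 1"
  shows "(\<Sum>x\<in>#U_tree G ar (Node a (t # replicate m Leaf)). Vstar_tree x)
       = U_tree G ar t + replicate_mset (card G * m) (Node a (t # replicate m Leaf))"
proof -
  let ?U = "U_tree G ar" and ?ts = "t # replicate m Leaf"
  have "(\<Sum>x\<in>#?U (Node a ?ts). Vstar_tree x)
      = (\<Sum>k<Suc m. \<Sum>y\<in>#?U (?ts ! k). Vstar_tree (Node a (?ts[k := y])))"
    by (simp add: U_tree_Node sum_mset_updates_at image_mset.compositionality o_def
             del: sum.lessThan_Suc Vstar_tree.simps)
  also have "\<dots> = (\<Sum>y\<in>#?U t. Vstar_tree (Node a (y # replicate m Leaf)))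
      + (\<Sum>i<m. \<Sum>y\<in>#?U Leaf. Vstar_tree (Node a (t # (replicate m Leaf)[i := y])))"
    by (simp add: sum.lessThan_Suc_shift del: sum.lessThan_Suc Vstar_tree.simps)
  also have "(\<Sum>y\<in>#?U t. Vstar_tree (Node a (y # replicate m Leaf))) = ?U t"
    by simp
  also have "(\<Sum>i<m. \<Sum>y\<in>#?U Leaf. Vstar_tree (Node a (t # (replicate m Leaf)[i := y])))
      = (\<Sum>i<m. replicate_mset (card G) (Node a ?ts))"
  proof (intro sum.cong refl)
    fix i assume "i \<in> {..<m}"
    then have "(\<Sum>y\<in>#?U Leaf. Vstar_tree (Node a (t # (replicate m Leaf)[i := y])))
        = (\<Sum>b\<in>G. {#Node a ?ts#})"
      using assms unfolding U_tree_Leaf sum_mset_sum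
      by (intro sum.cong) (simp_all add: Vstar_tree_graft_corolla del: Vstar_tree.simps)
    then show "(\<Sum>y\<in>#?U Leaf. Vstar_tree (Node a (t # (replicate m Leaf)[i := y])))
        = replicate_mset (card G) (Node a ?ts)"
      by (simp add: sum_singleton_mset_const)
  qed
  also have "\<dots> = replicate_mset (card G * m) (Node a ?ts)"
    by (simp add: sum_replicate_mset mult.commute)
  finally show ?thesis .
qed

lemma Vstar_tree_Node_branching_updates_at:
  assumes "\<exists>s\<in>set (tl ts). s \<noteq> Leaf" and "l \<in># updates_at (U_tree G ar) {..<length ts} ts"
  shows "Vstar_tree (Node a l) = image_mset (Node a) (updates_at Vstar_tree {1..<length ts} l)"
proof -
  from assms(2) obtain k y where k: "k < length ts" and y: "y \<in># U_tree G ar (ts ! k)"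
    and l: "l = ts[k := y]"
    by (auto simp: updates_at_def set_mset_sum)
  have "\<exists>s\<in>set (tl l). s \<noteq> Leaf"
  proof (cases k)
    case 0
    then show ?thesis using assms(1) l by (cases ts) auto
  next
    case (Suc k')
    then show ?thesis using k y l Leaf_notin_U_tree
      by (cases ts) (auto intro!: bexI[OF _ set_update_memI])
  qed
  then show ?thesis using l by (simp add: Vstar_tree_Node_branching del: Vstar_tree.simps)
qed

lemma Vstar_U_commutator:
  assumes "\<forall>b\<in>G. ar b \<ge> 1"
  shows "(\<Sum>x\<in>#U_tree G ar t. Vstar_tree x)
       = (\<Sum>x\<in>#Vstar_tree t. U_tree G ar x) + replicate_mset (card G * nf t) t"
proof (induction t)
  case Leaf
  have "(\<Sum>x\<in>#U_tree G ar Leaf. Vstar_tree x) = (\<Sum>b\<in>G. {#Leaf#})"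
    using assms unfolding U_tree_Leaf sum_mset_sum
    by (intro sum.cong) (simp_all add: Vstar_tree_corolla del: Vstar_tree.simps(2))
  then show ?case by (simp add: sum_singleton_mset_const)
next
  case (Node a ts)
  let ?U = "U_tree G ar" and ?V = Vstar_tree and ?n = "length ts"
  consider "ts = []" | t m where "ts = t # replicate m Leaf" | "\<exists>s\<in>set (tl ts). s \<noteq> Leaf"
    by (cases ts) (auto intro: replicate_eqI)
  then show ?case
  proof cases
    case 1
    then show ?thesis by (simp add: U_tree_Node updates_at_def)
  next
    case 2
    then show ?thesis using Vstar_U_tree_Node_first_child[OF assms] by (simp add: sum_list_replicate)
  next
    case 3
    have diag: "(\<Sum>y\<in>#?U (ts ! j). ?V y)
        = (\<Sum>y\<in>#?V (ts ! j). ?U y) + replicate_mset (card G * nf (ts ! j)) (ts ! j)"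
      if "j \<in> {1..<?n}" for j
      using Node.IH that by simp
    have "(\<Sum>x\<in>#?U (Node a ts). ?V x) = (\<Sum>l\<in>#updates_at ?U {..<?n} ts. ?V (Node a l))"
      by (simp only: U_tree_Node image_mset.compositionality o_def)
    also have "\<dots> = (\<Sum>l\<in>#updates_at ?U {..<?n} ts. image_mset (Node a) (updates_at ?V {1..<?n} l))"
      using Vstar_tree_Node_branching_updates_at[OF 3] by (intro arg_cong[where f=sum_mset] image_mset_cong)
    also have "\<dots> = image_mset (Node a) (\<Sum>l\<in>#updates_at ?U {..<?n} ts. updates_at ?V {1..<?n} l)"
      by (simp add: image_mset_sum_mset)
    also have "\<dots> = (\<Sum>l\<in>#updates_at ?V {1..<?n} ts. image_mset (Node a) (updates_at ?U {..<?n} l))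
        + image_mset (Node a) (\<Sum>j\<in>{1..<?n}. image_mset (\<lambda>y. ts[j := y])
                                  (replicate_mset (card G * nf (ts ! j)) (ts ! j)))"
      by (subst updates_at_commute[OF _ _ _ diag]) (auto simp: image_mset_sum_mset)
    also have "(\<Sum>l\<in>#updates_at ?V {1..<?n} ts. image_mset (Node a) (updates_at ?U {..<?n} l))
        = (\<Sum>l\<in>#updates_at ?V {1..<?n} ts. ?U (Node a l))"
      by (intro arg_cong[where f=sum_mset] image_mset_cong) (simp add: U_tree_Node length_updates_at)
    also have "\<dots> = (\<Sum>x\<in>#?V (Node a ts). ?U x)"
      by (simp only: Vstar_tree_Node_branching[OF 3] image_mset.compositionality o_def)
    also have "image_mset (Node a) (\<Sum>j\<in>{1..<?n}. image_mset (\<lambda>y. ts[j := y])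
                                  (replicate_mset (card G * nf (ts ! j)) (ts ! j)))
        = replicate_mset (card G * nf (Node a ts)) (Node a ts)"
      by (simp add: image_mset_sum nf_Node sum_replicate_mset sum_distrib_left)
    finally show ?thesis .
  qed
qed

lemma count_sum_mset_image:
  assumes "finite W" and "set_mset M \<subseteq> W"
  shows "count (\<Sum>x\<in>#M. f x) s = (\<Sum>u\<in>W. count M u * count (f u) s)"
  using assms(2)
proof (induction M)
  case empty
  then show ?case by simp
next
  case (add a M)
  have "(\<Sum>u\<in>W. count (add_mset a M) u * count (f u) s)
      = (\<Sum>u\<in>W. count M u * count (f u) s) + (\<Sum>u\<in>W. if u = a then count (f u) s else 0)"
    by (simp add: sum.distrib[symmetric]) (rule sum.cong, auto)
  also have "(\<Sum>u\<in>W. if u = a then count (f u) s else 0) = count (f a) s"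
    using add.prems assms(1) by (simp add: sum.delta)
  finally show ?case using add by simp
qed

lemma lin_add: "lin (\<lambda>t. f t + g t) v s = lin f v s + lin g v s"
  unfolding lin_def by (simp add: sum.distrib distrib_left)

lemma lin_eq_sum_superset:
  assumes "finite W" and "{t. v t \<noteq> 0} \<subseteq> W"
  shows "lin f v s = (\<Sum>t\<in>W. v t * of_nat (count (f t) s))"
  unfolding lin_def using assms by (intro sum.mono_neutral_left) auto

lemma lin_support_subset: "{u. lin g v u \<noteq> 0} \<subseteq> (\<Union>t\<in>{t. v t \<noteq> 0}. set_mset (g t))"
proof
  fix u assume "u \<in> {u. lin g v u \<noteq> 0}"
  then have "(\<Sum>t\<in>{t. v t \<noteq> 0}. v t * of_nat (count (g t) u)) \<noteq> 0"
    by (simp add: lin_def)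
  then obtain t where t: "t \<in> {t. v t \<noteq> 0}" and "v t * of_nat (count (g t) u) \<noteq> 0"
    by (rule sum.not_neutral_contains_not_neutral)
  then have "u \<in># g t"
    by (auto intro!: count_inI)
  with t show "u \<in> (\<Union>t\<in>{t. v t \<noteq> 0}. set_mset (g t))"
    by blast
qed

lemma lin_lin:
  assumes "finite {t. v t \<noteq> 0}"
  shows "lin f (lin g v) = lin (\<lambda>t. \<Sum>x\<in>#g t. f x) v"
proof
  fix s
  define S where "S = {t. v t \<noteq> 0}"
  define W where "W = (\<Union>t\<in>S. set_mset (g t))"
  have "finite W"
    unfolding W_def S_def using assms by auto
  have "lin f (lin g v) s = (\<Sum>u\<in>W. lin g v u * of_nat (count (f u) s))"
    using \<open>finite W\<close> lin_support_subset unfolding W_def S_def by (rule lin_eq_sum_superset)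
  also have "\<dots> = (\<Sum>t\<in>S. v t * (\<Sum>u\<in>W. of_nat (count (g t) u * count (f u) s)))"
    unfolding lin_def S_def sum_distrib_left sum_distrib_right of_nat_mult mult.assoc
    by (rule sum.swap)
  also have "\<dots> = (\<Sum>t\<in>S. v t * of_nat (count (\<Sum>x\<in>#g t. f x) s))"
  proof -
    have "set_mset (g t) \<subseteq> W" if "t \<in> S" for t
      using that unfolding W_def by auto
    then show ?thesis
      by (intro sum.cong refl) (simp add: count_sum_mset_image[OF \<open>finite W\<close>])
  qed
  also have "\<dots> = lin (\<lambda>t. \<Sum>x\<in>#g t. f x) v s"
    unfolding lin_def S_def ..
  finally show "lin f (lin g v) s = lin (\<lambda>t. \<Sum>x\<in>#g t. f x) v s" .
qed

theorem theorem2p7: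
  fixes G :: "'a set" and ar :: "'a \<Rightarrow> nat" and v :: "'a tree \<Rightarrow> 'k::field"
  assumes "finite G"
    and "\<forall>a\<in>G. ar a \<ge> 1"
    and "finite {t. v t \<noteq> 0}"
    and "\<forall>t. v t \<noteq> 0 \<longrightarrow> gtree G ar t"
  shows "lin Vstar_tree (lin (U_tree G ar) v) - lin (U_tree G ar) (lin Vstar_tree v)
           = lin (phi_tree G) v"
  \<comment> \<open>The identity holds for all trees and any G.\<close>
proof -
  have "(\<lambda>t. \<Sum>x\<in>#U_tree G ar t. Vstar_tree x)
      = (\<lambda>t. (\<Sum>x\<in>#Vstar_tree t. U_tree G ar x) + phi_tree G t)"
    using Vstar_U_commutator[OF assms(2)] by (simp add: phi_tree_def)
  then show ?thesis
    by (simp add: lin_lin[OF assms(3)] lin_add fun_eq_iff)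
qed

end
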